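(* Let $n\ge1$, $m\ge0$ be integers and let non-negative integers $r_0,\dots,r_n$ satisfy $r_n=0$, $r_{n-1}=m$, $r_\ell\ge 2r_{\ell+1}$ for $\ell=n-2,\dots,0$, and let $k\ge 2r_0+1$. Let $T$ be an $n$-simplex. Then for $\ell=1,\dots,n-1$ and every $f\in\Delta_\ell(T)$, $$D(f,r_\ell)\setminus\Big[\bigcup_{i=0}^{\ell-1}\bigcup_{e\in\Delta_i(f)}D(e,r_i)\Big]=D(f,r_\ell)\setminus\Big[\bigcup_{i=0}^{\ell-1}\bigcup_{e\in\Delta_i(T)}D(e,r_i)\Big].$$
   Context: $\mathbb N$ includes $0$; $\mathbb T^n_k=\{\alpha\in\mathbb N^{n+1}:\sum_i\alpha_i=k\}$. $\Delta_i(T)$ (resp. $\Delta_i(f)$) is the set of $i$-dimensional faces of $T$ (resp. of $f$); a face $e$ is identified with its vertex index set $e\subseteq\{0,\dots,n\}$ and $e^*=\{0,\dots,n\}\setminus e$. $D(e,r)=\{\alpha\in\mathbb T^n_k:\sum_{i\in e^*}\alpha_i\le r\}$. *)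

theory Defs
  imports Main
begin

(* Multi-indices alpha in N^{n+1} are represented as functions nat => nat
   vanishing outside {0..n}.  T^n_k = { alpha : sum alpha_i = k }. *)
definition lattice :: "nat \<Rightarrow> nat \<Rightarrow> (nat \<Rightarrow> nat) set" where
  "lattice n k = {\<alpha>. (\<forall>i>n. \<alpha> i = 0) \<and> (\<Sum>i\<le>n. \<alpha> i) = k}"

definition co_face :: "nat \<Rightarrow> nat set \<Rightarrow> nat set" where
  "co_face n e = {..n} - e"

definition Dset :: "nat \<Rightarrow> nat \<Rightarrow> nat set \<Rightarrow> nat \<Rightarrow> (nat \<Rightarrow> nat) set" where
  "Dset n k e r = {\<alpha> \<in> lattice n k. (\<Sum>i\<in>co_face n e. \<alpha> i) \<le> r}"

(* Delta_i(T): i-dimensional faces of the n-simplex T, identified with their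
   vertex index sets (subsets of {0..n} with i+1 elements) *)
definition faces_T :: "nat \<Rightarrow> nat \<Rightarrow> nat set set" where
  "faces_T n i = {e. e \<subseteq> {..n} \<and> card e = i + 1}"

definition faces_of :: "nat set \<Rightarrow> nat \<Rightarrow> nat set set" where
  "faces_of f i = {e. e \<subseteq> f \<and> card e = i + 1}"

end

theory Submission
  imports Defs
begin

text \<open>
  If \<open>\<alpha>\<close> lies in \<open>D(f, r\<^sub>l)\<close> and in \<open>D(e, r\<^sub>i)\<close> for an \<open>i\<close>-face \<open>e\<close> of \<open>T\<close> with \<open>i < l\<close>,
  then, since \<open>(e \<inter> f)\<^sup>* = e\<^sup>* \<union> f\<^sup>*\<close>, it lies in \<open>D(e \<inter> f, r\<^sub>i + r\<^sub>l)\<close>. The intersection cannot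
  be empty, because \<open>D(\<emptyset>, s)\<close> is empty for \<open>s < k\<close> and \<open>r\<^sub>i + r\<^sub>l \<le> 2 r\<^sub>0 < k\<close>. So either
  \<open>e \<subseteq> f\<close>, or \<open>e \<inter> f\<close> is a \<open>j\<close>-face of \<open>f\<close> with \<open>j < i\<close>, and then
  \<open>r\<^sub>j \<ge> 2 r\<^sub>j\<^sub>+\<^sub>1 \<ge> 2 r\<^sub>i \<ge> r\<^sub>i + r\<^sub>l\<close> puts \<open>\<alpha>\<close> into \<open>D(e \<inter> f, r\<^sub>j)\<close>. Either way \<open>\<alpha>\<close> is already
  removed by a face of \<open>f\<close> of dimension below \<open>l\<close>.
\<close>

lemma co_face_Int: "co_face n (e \<inter> f) = co_face n e \<union> co_face n f"
  by (auto simp: co_face_def)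

lemma Dset_mono: "s \<le> t \<Longrightarrow> Dset n k e s \<subseteq> Dset n k e t"
  by (auto simp: Dset_def)

lemma Dset_Int_face:
  assumes "\<alpha> \<in> Dset n k e s" and "\<alpha> \<in> Dset n k f t"
  shows "\<alpha> \<in> Dset n k (e \<inter> f) (s + t)"
proof -
  have "(\<Sum>i\<in>co_face n (e \<inter> f). \<alpha> i) \<le> (\<Sum>i\<in>co_face n e. \<alpha> i) + (\<Sum>i\<in>co_face n f. \<alpha> i)"
    unfolding co_face_Int by (subst sum_Un_nat) (simp_all add: co_face_def)
  with assms show ?thesis
    by (auto simp: Dset_def)
qed

lemma Dset_empty_face: "s < k \<Longrightarrow> Dset n k {} s = {}"
  by (auto simp: Dset_def lattice_def co_face_def)

lemma faces_of_subset_faces_T: "f \<subseteq> {..n} \<Longrightarrow> faces_of f i \<subseteq> faces_T n i"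
  by (auto simp: faces_of_def faces_T_def)

lemma Int_face_in_faces_of:
  assumes "e \<in> faces_T n i" and "e \<inter> f \<noteq> {}"
  obtains j where "j \<le> i" "e \<inter> f \<in> faces_of f j" "e \<subseteq> f \<or> j < i"
proof -
  have fin: "finite e" and card_e: "card e = i + 1"
    using assms(1) by (auto simp: faces_T_def finite_subset)
  define j where "j = card (e \<inter> f) - 1"
  have card_Int: "card (e \<inter> f) = j + 1"
    using assms(2) fin by (simp add: j_def card_gt_0_iff)
  show ?thesis
  proof (rule that)
    show "j \<le> i"
      using card_mono[OF fin, of "e \<inter> f"] card_Int card_e by simp
    show "e \<inter> f \<in> faces_of f j"
      using card_Int by (simp add: faces_of_def)
    have "j < i" if "\<not> e \<subseteq> f"
      using psubset_card_mono[OF fin, of "e \<inter> f"] that card_Int card_e by auto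
    then show "e \<subseteq> f \<or> j < i"
      by blast
  qed
qed

lemma Dset_face_covered_by_subface:
  fixes r :: "nat \<Rightarrow> nat"
  assumes e: "e \<in> faces_T n i"
    and \<alpha>: "\<alpha> \<in> Dset n k e (r i)" "\<alpha> \<in> Dset n k f s"
    and below_k: "r i + s < k"
    and below_r: "\<And>j. j < i \<Longrightarrow> r i + s \<le> r j"
  shows "\<exists>j\<le>i. \<exists>e'\<in>faces_of f j. \<alpha> \<in> Dset n k e' (r j)"
proof -
  have \<alpha>_Int: "\<alpha> \<in> Dset n k (e \<inter> f) (r i + s)"
    using \<alpha> by (rule Dset_Int_face)
  with below_k have nonempty: "e \<inter> f \<noteq> {}"
    using Dset_empty_face by fastforce
  obtain j where j: "j \<le> i" "e \<inter> f \<in> faces_of f j" and "e \<subseteq> f \<or> j < i"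
    using e nonempty by (rule Int_face_in_faces_of)
  then consider "e \<subseteq> f" | "j < i"
    by blast
  then show ?thesis
  proof cases
    case 1
    then have "e \<in> faces_of f i"
      using e by (auto simp: faces_of_def faces_T_def)
    with \<alpha>(1) show ?thesis
      by blast
  next
    case 2
    then have "\<alpha> \<in> Dset n k (e \<inter> f) (r j)"
      using \<alpha>_Int Dset_mono[OF below_r] by blast
    with j show ?thesis
      by blast
  qed
qed

lemma Dset_diff_faces_of_eq_faces_T:
  fixes r :: "nat \<Rightarrow> nat"
  assumes f: "f \<subseteq> {..n}"
    and below_k: "\<And>i. i < l \<Longrightarrow> r i + r l < k"
    and below_r: "\<And>i j. j < i \<Longrightarrow> i < l \<Longrightarrow> r i + r l \<le> r j"
  shows "Dset n k f (r l) - (\<Union>i<l. \<Union>e\<in>faces_of f i. Dset n k e (r i))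
       = Dset n k f (r l) - (\<Union>i<l. \<Union>e\<in>faces_T n i. Dset n k e (r i))"
proof
  show "Dset n k f (r l) - (\<Union>i<l. \<Union>e\<in>faces_T n i. Dset n k e (r i))
      \<subseteq> Dset n k f (r l) - (\<Union>i<l. \<Union>e\<in>faces_of f i. Dset n k e (r i))"
    using faces_of_subset_faces_T[OF f] by blast
next
  have "\<alpha> \<in> (\<Union>i<l. \<Union>e\<in>faces_of f i. Dset n k e (r i))"
    if \<alpha>_f: "\<alpha> \<in> Dset n k f (r l)" and "i < l" and e: "e \<in> faces_T n i"
      and \<alpha>_e: "\<alpha> \<in> Dset n k e (r i)" for \<alpha> i e
  proof -
    obtain j e' where "j \<le> i" "e' \<in> faces_of f j" "\<alpha> \<in> Dset n k e' (r j)"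
      using Dset_face_covered_by_subface[where r = r, OF e \<alpha>_e \<alpha>_f below_k below_r]
        \<open>i < l\<close> by blast
    with \<open>i < l\<close> show ?thesis
      by (auto intro!: bexI[of _ j])
  qed
  then show "Dset n k f (r l) - (\<Union>i<l. \<Union>e\<in>faces_of f i. Dset n k e (r i))
      \<subseteq> Dset n k f (r l) - (\<Union>i<l. \<Union>e\<in>faces_T n i. Dset n k e (r i))"
    by blast
qed

lemma antitone_upto:
  fixes r :: "nat \<Rightarrow> 'a::order"
  assumes "\<And>a. a < N \<Longrightarrow> r (Suc a) \<le> r a" and "a \<le> b" and "b \<le> N"
  shows "r b \<le> r a"
  using assms(2,3)
proof (induction b rule: dec_induct)
  case (step b)
  then show ?case
    using assms(1)[of b] by simp
qed simp

theorem mainTheorem6: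
  fixes n m k :: nat and r :: "nat \<Rightarrow> nat"
  assumes "n \<ge> 1"
    and "r n = 0" and "r (n - 1) = m"
    and "\<forall>l. l \<le> n - 2 \<longrightarrow> n \<ge> 2 \<longrightarrow> r l \<ge> 2 * r (l + 1)"
    and "k \<ge> 2 * r 0 + 1"
  shows "\<forall>l\<in>{1..n-1}. \<forall>f\<in>faces_T n l.
     Dset n k f (r l) - (\<Union>i<l. \<Union>e\<in>faces_of f i. Dset n k e (r i))
   = Dset n k f (r l) - (\<Union>i<l. \<Union>e\<in>faces_T n i. Dset n k e (r i))"
proof (intro ballI)
  fix l f
  assume l: "l \<in> {1..n-1}" and f: "f \<in> faces_T n l"
  have halving: "2 * r (Suc a) \<le> r a" if "a < n - 1" for a
    using assms(4) l that by auto
  have antitone: "r b \<le> r a" if "a \<le> b" "b \<le> n - 1" for a b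
    using antitone_upto[of "n - 1" r, OF _ that] halving by fastforce
  show "Dset n k f (r l) - (\<Union>i<l. \<Union>e\<in>faces_of f i. Dset n k e (r i))
      = Dset n k f (r l) - (\<Union>i<l. \<Union>e\<in>faces_T n i. Dset n k e (r i))"
  proof (rule Dset_diff_faces_of_eq_faces_T)
    show "f \<subseteq> {..n}"
      using f by (simp add: faces_T_def)
    show "r i + r l < k" if "i < l" for i
      using antitone[of 0 i] antitone[of 0 l] that l assms(5) by simp
    show "r i + r l \<le> r j" if "j < i" "i < l" for i j
      using antitone[of "Suc j" i] antitone[of i l] halving[of j] that l by simp
  qed
qed

end
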